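(* Let $n\ge3$ and let $A$ be a set of $m$ vertices of $C_n$ with $2\le m\le n$. (1) If $n$ is even or $m$ is odd, then $A$ is a maximizer of $W$ on $C_n$ if and only if $A$ is balanced in $C_n$. (2) If $n$ is odd and $m$ is even, then $A$ is a maximizer of $W$ on $C_n$ if and only if $A$ is weakly balanced in $C_n$; moreover, in this case no maximizer of $W$ on $C_n$ of cardinality $m$ is balanced. (3) In all cases, $A$ is a maximizer of $W$ on $C_n$ if and only if $A$ is weakly balanced in $C_n$.
   Context: $C_n$ has vertex set $\{0,\dots,n-1\}$ with $i$ adjacent to $i+1\bmod n$. $W(A)=\sum_{\{u,v\}\subseteq A,u\ne v}d(u,v)$ over unordered pairs, $d$ geodesic distance; $A$ is a maximizer of $W$ if $W(A)=\max\{W(B):|B|=|A|\}$. A set of vertices is connected if it induces a connected subgraph. A partition of $V(G)$ is equitable if any two blocks differ in size by at most one. $A$ is balanced in $G$ if for every equitable partition $\{P,Q\}$ of $V(G)$ into two connected blocks, $|A\cap P|$ and $|A\cap Q|$ differ by at most one. $A$ is weakly balanced in $G$ if for every equitable partition $\{P,Q\}$ of $V(G)$ into two connected blocks, $|A\cap P|$ and $|A\cap Q|$ differ by at most two, and whenever $|A\cap Q|=|A\cap P|+2$ we have $|P|<|Q|$. *)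

theory Defs
  imports Main
begin

definition cyc_V :: "nat \<Rightarrow> nat set" where
  "cyc_V n = {..<n}"

definition cyc_adj :: "nat \<Rightarrow> nat \<Rightarrow> nat \<Rightarrow> bool" where
  "cyc_adj n u v \<longleftrightarrow> u < n \<and> v < n \<and> u \<noteq> v \<and> (v = (u + 1) mod n \<or> u = (v + 1) mod n)"

definition is_walk :: "(nat \<Rightarrow> nat \<Rightarrow> bool) \<Rightarrow> nat list \<Rightarrow> nat \<Rightarrow> nat \<Rightarrow> bool" where
  "is_walk E xs u v \<longleftrightarrow> xs \<noteq> [] \<and> hd xs = u \<and> last xs = v \<and> successively E xs"

definition gdist :: "(nat \<Rightarrow> nat \<Rightarrow> bool) \<Rightarrow> nat \<Rightarrow> nat \<Rightarrow> nat" where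
  "gdist E u v = (LEAST k. \<exists>xs. is_walk E xs u v \<and> length xs = Suc k)"

definition Wiener :: "nat \<Rightarrow> nat set \<Rightarrow> nat" where
  "Wiener n A = (\<Sum>(u, v) \<in> {(u, v). u \<in> A \<and> v \<in> A \<and> u < v}. gdist (cyc_adj n) u v)"

definition is_maximizer :: "nat \<Rightarrow> nat set \<Rightarrow> bool" where
  "is_maximizer n A \<longleftrightarrow> A \<subseteq> cyc_V n \<and>
     (\<forall>B. B \<subseteq> cyc_V n \<and> card B = card A \<longrightarrow> Wiener n B \<le> Wiener n A)"

definition conn_set :: "nat \<Rightarrow> nat set \<Rightarrow> bool" where
  "conn_set n S \<longleftrightarrow> S \<subseteq> cyc_V n \<and>
     (\<forall>u\<in>S. \<forall>v\<in>S. \<exists>xs. is_walk (cyc_adj n) xs u v \<and> set xs \<subseteq> S)"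

definition eq_conn_bipart :: "nat \<Rightarrow> nat set \<Rightarrow> nat set \<Rightarrow> bool" where
  "eq_conn_bipart n P Q \<longleftrightarrow> P \<noteq> {} \<and> Q \<noteq> {} \<and> P \<inter> Q = {} \<and> P \<union> Q = cyc_V n \<and>
     \<bar>int (card P) - int (card Q)\<bar> \<le> 1 \<and> conn_set n P \<and> conn_set n Q"

definition balanced :: "nat \<Rightarrow> nat set \<Rightarrow> bool" where
  "balanced n A \<longleftrightarrow> (\<forall>P Q. eq_conn_bipart n P Q \<longrightarrow>
     \<bar>int (card (A \<inter> P)) - int (card (A \<inter> Q))\<bar> \<le> 1)"

definition weakly_balanced :: "nat \<Rightarrow> nat set \<Rightarrow> bool" where
  "weakly_balanced n A \<longleftrightarrow> (\<forall>P Q. eq_conn_bipart n P Q \<longrightarrow>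
     \<bar>int (card (A \<inter> P)) - int (card (A \<inter> Q))\<bar> \<le> 2 \<and>
     (card (A \<inter> Q) = card (A \<inter> P) + 2 \<longrightarrow> card P < card Q))"

end

theory Submission
  imports Defs
begin

text \<open>
  Write \<open>H\<^sub>i\<close> for the arc of \<open>\<lfloor>n/2\<rfloor>\<close> consecutive vertices starting at \<open>i\<close>.
  Among the \<open>n\<close> half arcs, exactly \<open>d(u,v)\<close> contain \<open>u\<close> but not \<open>v\<close>; hence
  \<open>2 W(A) = \<Sum>\<^sub>i g\<^sub>i (m - g\<^sub>i)\<close> with \<open>g\<^sub>i = |A \<inter> H\<^sub>i|\<close>, while \<open>\<Sum>\<^sub>i g\<^sub>i = \<lfloor>n/2\<rfloor> m\<close>
  does not depend on \<open>A\<close>. So \<open>W(A)\<close> is maximal iff \<open>\<Sum>\<^sub>i g\<^sub>i\<^sup>2\<close> is minimal, i.e. iff every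
  \<open>g\<^sub>i\<close> lies in \<open>{c, c + 1}\<close> with \<open>c = \<lfloor>\<lfloor>n/2\<rfloor> m / n\<rfloor>\<close>; the evenly spread set of jump
  points of \<open>v \<mapsto> \<lfloor>v m / n\<rfloor>\<close> shows that this bound is attained. The equitable partitions of
  \<open>C\<^sub>n\<close> into two connected blocks are exactly the pairs \<open>{H\<^sub>i, V - H\<^sub>i}\<close>, so (weak) balance
  is a condition on the \<open>g\<^sub>i\<close> as well, and the theorem follows by comparing the conditions
  according to the parities of \<open>n\<close> and \<open>m\<close>.
\<close>

lemma card_filter_permute:
  assumes "inj_on f {..<n::nat}" "f ` {..<n} \<subseteq> {..<n}"
  shows "card {i. i < n \<and> P (f i)} = card {j. j < n \<and> P j}"
proof -
  have perm: "f ` {..<n} = {..<n}" by (rule endo_inj_surj) (use assms in auto)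
  have "f ` {i. i < n \<and> P (f i)} = {j. j < n \<and> P j}"
    using perm by (auto simp: image_iff)
  moreover have "inj_on f {i. i < n \<and> P (f i)}" by (rule inj_on_subset[OF assms(1)]) auto
  ultimately show ?thesis by (metis card_image)
qed

lemma card_filter_diff_mod:
  assumes "n > 0"
  shows "card {i. i < n \<and> P (nat ((c - int i) mod int n))} = card {j. j < n \<and> P j}"
proof (rule card_filter_permute)
  show "inj_on (\<lambda>i. nat ((c - int i) mod int n)) {..<n}"
  proof (rule inj_onI)
    fix i j assume "i \<in> {..<n}" "j \<in> {..<n}" "nat ((c - int i) mod int n) = nat ((c - int j) mod int n)"
    then have "(c - int i) mod int n = (c - int j) mod int n" "i < n" "j < n"
      using assms by (auto simp: eq_nat_nat_iff)
    then have "(c - (c - int i) mod int n) mod int n = (c - (c - int j) mod int n) mod int n"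
      by simp
    then show "i = j" using \<open>i < n\<close> \<open>j < n\<close> by (simp add: mod_diff_right_eq)
  qed
  show "(\<lambda>i. nat ((c - int i) mod int n)) ` {..<n} \<subseteq> {..<n}"
    using assms by (auto simp: nat_less_iff)
qed

lemma card_lessThan_filter: "card {i. i < (n::nat) \<and> P i} = (\<Sum>i<n. of_bool (P i) :: nat)"
proof -
  have "{i. i < n \<and> P i} = {..<n} \<inter> {i. P i}" by auto
  then show ?thesis by (simp only: sum_of_bool_eq finite_lessThan of_nat_id)
qed

lemma sum_sum_symmetric_eq_double:
  fixes f :: "'a::linorder \<Rightarrow> 'a \<Rightarrow> nat"
  assumes fin: "finite A" and sym: "\<And>u v. f u v = f v u" and diag: "\<And>u. f u u = 0"
  shows "(\<Sum>u\<in>A. \<Sum>v\<in>A. f u v) = 2 * (\<Sum>(u, v) \<in> {(u, v). u \<in> A \<and> v \<in> A \<and> u < v}. f u v)"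
proof -
  define L where "L = {(u, v). u \<in> A \<and> v \<in> A \<and> u < v}"
  have finL: "finite L" by (rule finite_subset[of _ "A \<times> A"]) (use fin in \<open>auto simp: L_def\<close>)
  have AA: "A \<times> A = L \<union> prod.swap ` L \<union> (\<lambda>u. (u, u)) ` A"
    unfolding L_def by (auto simp: image_iff)
  have "(\<Sum>u\<in>A. \<Sum>v\<in>A. f u v) = (\<Sum>(u, v)\<in>A \<times> A. f u v)"
    by (simp add: sum.cartesian_product)
  also have "\<dots> = (\<Sum>(u, v)\<in>L. f u v) + (\<Sum>(u, v)\<in>prod.swap ` L. f u v) + (\<Sum>(u, v)\<in>(\<lambda>u. (u, u)) ` A. f u v)"
    unfolding AA using fin finL
    by (subst sum.union_disjoint; auto simp: L_def)+
  also have "(\<Sum>(u, v)\<in>prod.swap ` L. f u v) = (\<Sum>(u, v)\<in>L. f u v)"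
    by (subst sum.reindex) (auto simp: sym intro!: sum.cong)
  also have "(\<Sum>(u, v)\<in>(\<lambda>u. (u, u)) ` A. f u v) = 0"
    by (simp add: sum.reindex inj_on_def diag)
  finally show ?thesis unfolding L_def by simp
qed

lemma all_eq_if_sum_eq:
  fixes f :: "nat \<Rightarrow> nat"
  assumes "\<forall>i<n. c \<le> f i" "(\<Sum>i<n. f i) = n * c"
  shows "\<forall>i<n. f i = c"
proof -
  have "(\<Sum>i<n. f i - c) = (\<Sum>i<n. f i) - n * c"
    using assms(1) by (subst sum_subtractf_nat) auto
  then have "f i \<le> c" if "i < n" for i using that assms(2) by simp
  then show ?thesis using assms(1) by (simp add: order_antisym)
qed

lemma successively_int_ivt:
  fixes f :: "'a \<Rightarrow> int"
  assumes "successively (\<lambda>x y. \<bar>f y - f x\<bar> \<le> 1) xs" "xs \<noteq> []" "f (hd xs) \<le> w" "w \<le> f (last xs)"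
  shows "\<exists>z\<in>set xs. f z = w"
  using assms
proof (induction xs rule: induct_list012)
  case (3 x y zs)
  show ?case
  proof (cases "f x = w")
    case False
    with "3.prems" have "f y \<le> w" by auto
    with "3.prems" "3.IH"(2) show ?thesis by auto
  qed simp
qed auto

lemma int_le_square: "(e::int) \<le> e\<^sup>2"
  by (simp add: power2_eq_square, smt (verit) mult_le_cancel_left1)

lemma sum_sq_minus_self_nonneg: "(\<Sum>i<n::nat. (e i)\<^sup>2 - e i) \<ge> (0::int)"
  using int_le_square by (simp add: sum_nonneg)

lemma sum_sq_minus_self_eq_0_iff:
  "(\<Sum>i<n::nat. (e i)\<^sup>2 - e i) = (0::int) \<longleftrightarrow> (\<forall>i<n. e i = 0 \<or> e i = 1)"
proof -
  have "(e i)\<^sup>2 - e i = 0 \<longleftrightarrow> e i = 0 \<or> e i = 1" for i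
    by (auto simp: power2_eq_square algebra_simps)
  then show ?thesis using int_le_square by (subst sum_nonneg_eq_0_iff) auto
qed

lemma sum_squares_excess:
  fixes x y :: "nat \<Rightarrow> int"
  assumes "(\<Sum>i<n. x i) = (\<Sum>i<n. y i)" "\<forall>i<n. y i = c \<or> y i = c + 1"
  shows "(\<Sum>i<n. (x i)\<^sup>2) = (\<Sum>i<n. (y i)\<^sup>2) + (\<Sum>i<n. (x i - c)\<^sup>2 - (x i - c))"
proof -
  have expand: "(\<Sum>i<n. (z i - c)\<^sup>2 - (z i - c))
      = (\<Sum>i<n. (z i)\<^sup>2) - (2 * c + 1) * (\<Sum>i<n. z i) + int n * (c\<^sup>2 + c)" for z :: "nat \<Rightarrow> int"
  proof -
    have "(\<Sum>i<n. (z i - c)\<^sup>2 - (z i - c)) = (\<Sum>i<n. (z i)\<^sup>2 - (2 * c + 1) * z i + (c\<^sup>2 + c))"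
      by (intro sum.cong) (simp_all add: power2_eq_square algebra_simps)
    then show ?thesis by (simp add: sum.distrib sum_subtractf sum_distrib_left)
  qed
  have "(\<Sum>i<n. (y i - c)\<^sup>2 - (y i - c)) = 0"
    using assms(2) by (intro sum.neutral) (auto simp: power2_eq_square)
  then show ?thesis using expand[of x] expand[of y] assms(1) by simp
qed

lemma div_mult_Suc_le:
  assumes "m \<le> n"
  shows "Suc t * m div n \<le> t * m div n + 1"
proof (cases "n = 0")
  case False
  have "Suc t * m div n \<le> (t * m + n) div n" using assms by (intro div_le_mono) simp
  also have "\<dots> = t * m div n + 1" using False by (simp add: div_add_self2)
  finally show ?thesis .
qed simp

lemma half_mult_div_even:
  fixes n m :: nat
  assumes "even n" "n > 0"
  shows "n div 2 * m div n = m div 2"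
proof -
  obtain k where "n = 2 * k" "k > 0" using assms by auto
  then show ?thesis by (simp add: mult.commute div_mult2_eq)
qed

lemma half_mult_div_odd:
  fixes n m :: nat
  assumes "odd n" "m \<le> n"
  shows "n div 2 * m div n = (m - 1) div 2"
proof -
  obtain k where n: "n = 2 * k + 1" using assms(1) oddE by blast
  define b where "b = (m - 1) div 2"
  have "k * m div (2 * k + 1) = b"
  proof (cases "m = 0")
    case False
    then have "m = 2 * b + 1 \<or> m = 2 * b + 2" unfolding b_def by presburger
    then show ?thesis using assms(2) unfolding n by (auto intro!: div_nat_eqI simp: algebra_simps)
  qed (simp add: b_def)
  then show ?thesis unfolding n b_def by simp
qed

section \<open>Distance on the cycle\<close>

definition cyc_dist :: "nat \<Rightarrow> nat \<Rightarrow> nat \<Rightarrow> int" where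
  "cyc_dist n u v = min ((int v - int u) mod int n) ((int u - int v) mod int n)"

lemma cyc_adj_sym: "cyc_adj n u v = cyc_adj n v u"
  unfolding cyc_adj_def by auto

lemma cyc_adj_mod:
  assumes "cyc_adj n u v"
  obtains e where "\<bar>e\<bar> = 1" "int v mod int n = (int u + e) mod int n"
proof -
  have "v = (u + 1) mod n \<or> u = (v + 1) mod n" using assms unfolding cyc_adj_def by auto
  then have "int v mod int n = (int u + 1) mod int n \<or> int v mod int n = (int u - 1) mod int n"
    by (auto simp: zmod_int mod_diff_left_eq ac_simps)
  then show ?thesis using that[of 1] that[of "- 1"] by auto
qed

lemma cyc_adj_Suc_mod:
  assumes "n \<ge> 3"
  shows "cyc_adj n ((a + t) mod n) ((a + Suc t) mod n)"
proof -
  have "cyc_adj n r (Suc r mod n)" if "r < n" for r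
    using assms that unfolding cyc_adj_def by (auto simp: mod_Suc)
  moreover have "(a + Suc t) mod n = Suc ((a + t) mod n) mod n" by (simp add: mod_Suc_eq)
  ultimately show ?thesis using assms by simp
qed

lemma is_walk_rev:
  assumes "\<And>x y. E x y = E y x" "is_walk E xs u v"
  shows "is_walk E (rev xs) v u"
  using assms unfolding is_walk_def by (simp add: hd_rev last_rev)

lemma is_walk_upt:
  assumes "n \<ge> 3" "s \<le> t"
  shows "is_walk (cyc_adj n) (map (\<lambda>j. (a + j) mod n) [s..<Suc t]) ((a + s) mod n) ((a + t) mod n)"
proof -
  have "successively (cyc_adj n) (map (\<lambda>j. (a + j) mod n) [s..<Suc t])"
    unfolding successively_map using cyc_adj_Suc_mod[OF assms(1)]
    by (simp add: successively_conv_nth del: upt_Suc)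
  then show ?thesis using assms(2) unfolding is_walk_def by (simp add: last_map hd_map del: upt_Suc)
qed

lemma cyc_walk_displacement:
  assumes "successively (cyc_adj n) xs" "xs \<noteq> []"
  shows "\<exists>j. \<bar>j\<bar> < int (length xs) \<and> (int (hd xs) + j) mod int n = int (last xs) mod int n"
  using assms
proof (induction xs rule: induct_list012)
  case 1
  then show ?case by simp
next
  case (2 x)
  show ?case by (intro exI[of _ 0]) simp
next
  case (3 x y zs)
  then have adj: "cyc_adj n x y" and "successively (cyc_adj n) (y # zs)" by auto
  with "3.IH"(2) obtain j where j: "\<bar>j\<bar> < int (length (y # zs))"
    "(int y + j) mod int n = int (last (y # zs)) mod int n" by auto
  obtain e where e: "\<bar>e\<bar> = 1" "int y mod int n = (int x + e) mod int n"
    using cyc_adj_mod[OF adj] .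
  have "(int x + (e + j)) mod int n = ((int x + e) mod int n + j) mod int n"
    by (simp add: mod_add_left_eq add.assoc)
  also have "\<dots> = (int y + j) mod int n" by (simp add: e(2)[symmetric] mod_add_left_eq)
  finally have "(int x + (e + j)) mod int n = (int y + j) mod int n" .
  with j e show ?case by (intro exI[of _ "e + j"]) auto
qed

lemma cyc_dist_le:
  assumes "(int u + j) mod int n = int v mod int n"
  shows "cyc_dist n u v \<le> \<bar>j\<bar>"
proof -
  have "(int v - int u) mod int n = (int v mod int n - int u) mod int n"
    "(int u - int v) mod int n = (int u - int v mod int n) mod int n"
    by (simp_all add: mod_diff_left_eq mod_diff_right_eq)
  then have "(int v - int u) mod int n = j mod int n" "(int u - int v) mod int n = (- j) mod int n"
    unfolding assms[symmetric] by (simp_all add: mod_diff_left_eq mod_diff_right_eq)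
  then show ?thesis unfolding cyc_dist_def
    by (cases "j \<ge> 0") (auto simp: min_le_iff_disj intro: zmod_le_nonneg_dividend)
qed

lemma gdist_cyc:
  assumes "n \<ge> 3" "u < n" "v < n"
  shows "gdist (cyc_adj n) u v = nat (cyc_dist n u v)"
  unfolding gdist_def
proof (rule Least_equality)
  have walk_from: "\<exists>xs. is_walk (cyc_adj n) xs x y \<and> length xs = Suc (nat ((int y - int x) mod int n))"
    if "x < n" "y < n" for x y
  proof -
    define d where "d = nat ((int y - int x) mod int n)"
    have "int ((x + d) mod n) = (int x + (int y - int x)) mod int n"
      using assms unfolding d_def by (simp add: zmod_int mod_add_right_eq)
    then have "(x + d) mod n = y" using that by simp
    then show ?thesis using is_walk_upt[OF assms(1) le0, of x d] that unfolding d_def[symmetric]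
      by (intro exI[of _ "map (\<lambda>j. (x + j) mod n) [0..<Suc d]"]) (simp del: upt_Suc)
  qed
  show "\<exists>xs. is_walk (cyc_adj n) xs u v \<and> length xs = Suc (nat (cyc_dist n u v))"
  proof (cases "(int v - int u) mod int n \<le> (int u - int v) mod int n")
    case True
    then show ?thesis using walk_from[OF assms(2,3)] unfolding cyc_dist_def by simp
  next
    case False
    then have "cyc_dist n u v = (int u - int v) mod int n" unfolding cyc_dist_def by simp
    with walk_from[OF assms(3,2)] show ?thesis
      using is_walk_rev[of "cyc_adj n", OF cyc_adj_sym] length_rev by metis
  qed
next
  fix k assume "\<exists>xs. is_walk (cyc_adj n) xs u v \<and> length xs = Suc k"
  then obtain xs where "is_walk (cyc_adj n) xs u v" "length xs = Suc k" by blast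
  with cyc_walk_displacement[of n xs] obtain j where "\<bar>j\<bar> < int (Suc k)"
    "(int u + j) mod int n = int v mod int n" unfolding is_walk_def by auto
  with cyc_dist_le show "nat (cyc_dist n u v) \<le> k" by fastforce
qed

lemma cyc_dist_eq_min:
  fixes u v :: nat
  assumes "n > 0"
  defines "d \<equiv> nat ((int v - int u) mod int n)"
  shows "cyc_dist n u v = int (min d (n - d))"
proof -
  have d: "(int v - int u) mod int n = int d" "d < n"
    unfolding d_def using assms(1) by (auto simp: nat_less_iff)
  have "(int u - int v) mod int n = (- (int v - int u)) mod int n" by simp
  also have "\<dots> = (if d = 0 then 0 else int n - int d)"
    unfolding zmod_zminus1_eq_if d(1) by simp
  finally show ?thesis unfolding cyc_dist_def d(1) using d(2) by auto
qed

section \<open>Arcs\<close>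

definition arc :: "nat \<Rightarrow> nat \<Rightarrow> nat \<Rightarrow> nat set" where
  "arc n a l = {v. v < n \<and> (int v - int a) mod int n < int l}"

lemma arc_subset: "arc n a l \<subseteq> cyc_V n"
  unfolding arc_def cyc_V_def by auto

lemma arc_eq_image:
  assumes "n > 0" "l \<le> n"
  shows "arc n a l = (\<lambda>j. (a + j) mod n) ` {..<l}"
proof (rule set_eqI, rule iffI)
  fix v assume v: "v \<in> arc n a l"
  define j where "j = nat ((int v - int a) mod int n)"
  have "int ((a + j) mod n) = (int a + (int v - int a)) mod int n"
    using assms unfolding j_def by (simp add: zmod_int mod_add_right_eq)
  then have "(a + j) mod n = v" using v unfolding arc_def by simp
  moreover have "j < l" using v assms unfolding arc_def j_def by (simp add: nat_less_iff)
  ultimately show "v \<in> (\<lambda>j. (a + j) mod n) ` {..<l}" by blast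
next
  fix v assume "v \<in> (\<lambda>j. (a + j) mod n) ` {..<l}"
  then obtain j where j: "j < l" "v = (a + j) mod n" by blast
  have "(int v - int a) mod int n = (int a + int j - int a) mod int n"
    unfolding j(2) by (simp add: zmod_int mod_diff_left_eq)
  then show "v \<in> arc n a l" using j assms unfolding arc_def by simp
qed

lemma inj_on_add_mod: "inj_on (\<lambda>j. (a + j) mod n) {..<n::nat}"
proof (rule inj_onI)
  fix i j assume ij: "i \<in> {..<n}" "j \<in> {..<n}" and "(a + i) mod n = (a + j) mod n"
  then have "(int a + int i) mod int n = (int a + int j) mod int n" by (metis of_nat_add zmod_int)
  then have "((int a + int i) mod int n - int a) mod int n = ((int a + int j) mod int n - int a) mod int n"
    by simp
  then have "int i mod int n = int j mod int n" by (simp add: mod_diff_left_eq)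
  then show "i = j" using ij by simp
qed

lemma card_arc:
  assumes "n > 0" "l \<le> n"
  shows "card (arc n a l) = l"
  unfolding arc_eq_image[OF assms]
  using card_image[OF inj_on_subset[OF inj_on_add_mod, of "{..<l}"]] assms by auto

lemma arc_compl:
  assumes "n > 0" "k \<le> n"
  shows "cyc_V n - arc n a k = arc n (a + k) (n - k)"
proof (rule set_eqI)
  fix v
  define x where "x = (int v - int a) mod int n"
  have x: "0 \<le> x" "x < int n" unfolding x_def using assms by auto
  have "(int v - int (a + k)) mod int n = (x - int k) mod int n"
    unfolding x_def by (simp add: mod_diff_left_eq algebra_simps)
  also have "\<dots> = (if x < int k then x - int k + int n else x - int k)"
  proof (cases "x < int k")
    case True
    have "(x - int k) mod int n = (x - int k + int n) mod int n" by simp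
    also have "\<dots> = x - int k + int n" using True x assms by (intro mod_pos_pos_trivial) auto
    finally show ?thesis using True by simp
  qed (use x in \<open>auto intro: mod_pos_pos_trivial\<close>)
  finally have "v \<in> arc n (a + k) (n - k) \<longleftrightarrow> v < n \<and> \<not> x < int k"
    unfolding arc_def using x assms by auto
  moreover have "v \<in> arc n a k \<longleftrightarrow> v < n \<and> x < int k" unfolding arc_def x_def by simp
  ultimately show "v \<in> cyc_V n - arc n a k \<longleftrightarrow> v \<in> arc n (a + k) (n - k)"
    unfolding cyc_V_def by auto
qed

lemma conn_set_arc:
  assumes "n \<ge> 3" "l \<le> n"
  shows "conn_set n (arc n a l)"
  unfolding conn_set_def
proof (intro conjI ballI arc_subset)
  have n0: "n > 0" using assms(1) by simp
  fix u v assume "u \<in> arc n a l" "v \<in> arc n a l"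
  then obtain s t where st: "s < l" "t < l" "u = (a + s) mod n" "v = (a + t) mod n"
    unfolding arc_eq_image[OF n0 assms(2)] by auto
  have sub: "set (map (\<lambda>j. (a + j) mod n) [x..<Suc y]) \<subseteq> arc n a l" if "y < l" for x y
    unfolding arc_eq_image[OF n0 assms(2)] using that by auto
  show "\<exists>xs. is_walk (cyc_adj n) xs u v \<and> set xs \<subseteq> arc n a l"
  proof (cases "s \<le> t")
    case True
    then show ?thesis using is_walk_upt[OF assms(1) True, of a] sub[of t s] st by blast
  next
    case False
    let ?xs = "map (\<lambda>j. (a + j) mod n) [t..<Suc s]"
    have "is_walk (cyc_adj n) (rev ?xs) u v"
      using is_walk_rev[OF cyc_adj_sym is_walk_upt[OF assms(1), of t s a]] False st by simp
    then show ?thesis using sub[of s t] st by (intro exI[of _ "rev ?xs"]) (simp del: upt_Suc)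
  qed
qed

lemma card_arcs_containing:
  assumes "n > 0" "l \<le> n" "u < n"
  shows "card {i. i < n \<and> u \<in> arc n i l} = l"
proof -
  have "u \<in> arc n i l \<longleftrightarrow> nat ((int u - int i) mod int n) < l" for i
    unfolding arc_def using assms by (auto simp: nat_less_iff)
  then have "card {i. i < n \<and> u \<in> arc n i l} = card {j. j < n \<and> j < l}"
    using card_filter_diff_mod[OF assms(1), of "\<lambda>j. j < l"] by simp
  also have "{j. j < n \<and> j < l} = {..<l}" using assms by auto
  finally show ?thesis by simp
qed

text \<open>Cutting \<open>C\<^sub>n\<close> open at \<open>c\<close>: the path \<open>c + 1, c + 2, \<dots>, c - 1\<close> is numbered \<open>0, \<dots>, n - 2\<close>.\<close>

definition cyc_unroll :: "nat \<Rightarrow> nat \<Rightarrow> nat \<Rightarrow> nat" where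
  "cyc_unroll n c v = (v + (n - Suc c)) mod n"

lemma cyc_unroll_inverse:
  assumes "c < n" "v < n"
  shows "(Suc c + cyc_unroll n c v) mod n = v"
proof -
  have "(Suc c + cyc_unroll n c v) mod n = (Suc c + (v + (n - Suc c))) mod n"
    unfolding cyc_unroll_def by (rule mod_add_right_eq)
  also have "Suc c + (v + (n - Suc c)) = v + n" using assms(1) by simp
  finally show ?thesis using assms(2) by simp
qed

lemma cyc_unroll_adj:
  assumes "cyc_adj n x y" "x \<noteq> c" "y \<noteq> c" "c < n"
  shows "\<bar>int (cyc_unroll n c y) - int (cyc_unroll n c x)\<bar> \<le> 1"
proof -
  have step: "cyc_unroll n c (Suc u mod n) = Suc (cyc_unroll n c u)" if "u < n" "u \<noteq> c" for u
  proof -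
    have "Suc (cyc_unroll n c u) \<noteq> n"
    proof
      assume "Suc (cyc_unroll n c u) = n"
      then have e: "Suc c + cyc_unroll n c u = c + n" by simp
      have "(Suc c + cyc_unroll n c u) mod n = c" unfolding e using assms(4) by simp
      then show False using cyc_unroll_inverse[OF assms(4) that(1)] that(2) by simp
    qed
    moreover have "cyc_unroll n c u < n" unfolding cyc_unroll_def using assms(4) by simp
    moreover have "cyc_unroll n c (Suc u mod n) = Suc (cyc_unroll n c u) mod n"
      unfolding cyc_unroll_def by (simp add: mod_add_left_eq mod_Suc_eq)
    ultimately show ?thesis by simp
  qed
  from assms(1) have "x < n" "y < n" "y = Suc x mod n \<or> x = Suc y mod n"
    unfolding cyc_adj_def by auto
  then show ?thesis using step assms(2,3) by auto
qed

lemma cyc_unroll_conn_set_interval: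
  assumes "conn_set n S" "c < n" "c \<notin> S" "s1 \<in> S" "s2 \<in> S"
  shows "{cyc_unroll n c s1..cyc_unroll n c s2} \<subseteq> cyc_unroll n c ` S"
proof
  fix w assume w: "w \<in> {cyc_unroll n c s1..cyc_unroll n c s2}"
  obtain xs where xs: "is_walk (cyc_adj n) xs s1 s2" "set xs \<subseteq> S"
    using assms(1,4,5) unfolding conn_set_def by blast
  have "successively (\<lambda>x y. \<bar>int (cyc_unroll n c y) - int (cyc_unroll n c x)\<bar> \<le> 1) xs"
  proof (rule successively_mono)
    show "successively (cyc_adj n) xs" using xs(1) unfolding is_walk_def by blast
    show "\<bar>int (cyc_unroll n c y) - int (cyc_unroll n c x)\<bar> \<le> 1"
      if "x \<in> set xs" "y \<in> set xs" "cyc_adj n x y" for x y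
      using cyc_unroll_adj[OF that(3) _ _ assms(2)] that(1,2) xs(2) assms(3) by blast
  qed
  moreover have "xs \<noteq> []" "hd xs = s1" "last xs = s2" using xs(1) unfolding is_walk_def by auto
  ultimately have "\<exists>z\<in>set xs. int (cyc_unroll n c z) = int w"
    using successively_int_ivt[of "\<lambda>v. int (cyc_unroll n c v)" xs "int w"] w by auto
  then show "w \<in> cyc_unroll n c ` S" using xs(2) by auto
qed

lemma conn_set_is_arc:
  assumes "n \<ge> 3" "conn_set n S" "card S = k" "0 < k" "k < n"
  shows "\<exists>i<n. S = arc n i k"
proof -
  have SV: "\<And>v. v \<in> S \<Longrightarrow> v < n" using assms(2) unfolding conn_set_def cyc_V_def by blast
  then have finS: "finite S" using finite_subset[of S "{..<n}"] by blast
  have "S \<noteq> {..<n}" using assms(3,5) by auto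
  then obtain c where c: "c < n" "c \<notin> S" using SV by blast
  define \<phi> where "\<phi> = cyc_unroll n c"
  have inverse: "(Suc c + \<phi> v) mod n = v" if "v \<in> S" for v
    unfolding \<phi>_def using cyc_unroll_inverse[OF c(1) SV[OF that]] .
  have inj: "inj_on \<phi> S"
  proof (rule inj_onI)
    fix x y assume "x \<in> S" "y \<in> S" "\<phi> x = \<phi> y"
    then show "x = y" using inverse by metis
  qed
  have ne: "\<phi> ` S \<noteq> {}" using assms(3,4) by auto
  obtain s1 where s1: "s1 \<in> S" "\<phi> s1 = Min (\<phi> ` S)"
    using Min_in[OF finite_imageI[OF finS] ne] by (metis imageE)
  obtain s2 where s2: "s2 \<in> S" "\<phi> s2 = Max (\<phi> ` S)"
    using Max_in[OF finite_imageI[OF finS] ne] by (metis imageE)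
  have "\<phi> ` S = {\<phi> s1..\<phi> s2}"
    using s1 s2 finS cyc_unroll_conn_set_interval[OF assms(2) c s1(1) s2(1)] unfolding \<phi>_def by auto
  moreover have "card (\<phi> ` S) = k" using card_image[OF inj] assms(3) by simp
  ultimately have "\<phi> ` S = {\<phi> s1..<\<phi> s1 + k}" using assms(4) by auto
  then have image: "\<phi> ` S = (\<lambda>j. \<phi> s1 + j) ` {..<k}" by (simp add: lessThan_atLeast0 add.commute)
  have "S = (\<lambda>j. (Suc c + \<phi> s1 + j) mod n) ` {..<k}"
  proof -
    have "S = (\<lambda>t. (Suc c + t) mod n) ` \<phi> ` S" using inverse by (simp add: image_image cong: image_cong)
    then show ?thesis unfolding image image_image by (simp add: add.assoc)
  qed
  also have "\<dots> = arc n ((Suc c + \<phi> s1) mod n) k"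
    using assms(5) by (simp add: arc_eq_image mod_add_left_eq)
  finally show ?thesis using c(1) by (intro exI[of _ "(Suc c + \<phi> s1) mod n"]) auto
qed

section \<open>The Wiener index through half arcs\<close>

definition half_arc :: "nat \<Rightarrow> nat \<Rightarrow> nat set" where
  "half_arc n i = arc n i (n div 2)"

definition half_count :: "nat \<Rightarrow> nat set \<Rightarrow> nat \<Rightarrow> nat" where
  "half_count n A i = card (A \<inter> half_arc n i)"

lemma half_count_le_card:
  assumes "A \<subseteq> cyc_V n"
  shows "half_count n A i \<le> card A"
  unfolding half_count_def using assms finite_subset[OF assms]
  by (intro card_mono) (auto simp: cyc_V_def)

lemma card_window_rotate_out:
  assumes "2 * k \<le> n" "n \<le> 2 * k + 1" "d < n"
  shows "card {j. j < n \<and> j < k \<and> \<not> (j + d) mod n < k} = min d (n - d)"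
proof (cases "d \<le> k")
  case True
  have "{j. j < n \<and> j < k \<and> \<not> (j + d) mod n < k} = {k - d..<k}"
    using assms True by auto
  then show ?thesis using assms True by simp
next
  case False
  have "(j + d) mod n = (if j + d < n then j + d else j + d - n)" if "j < k" for j
    using assms that by (auto simp: mod_if le_mod_geq)
  then have "{j. j < n \<and> j < k \<and> \<not> (j + d) mod n < k} = {..<n - d}"
    using assms False by (auto split: if_splits)
  then show ?thesis using assms False by simp
qed

lemma card_half_arcs_separating:
  assumes "n > 0" "u < n" "v < n"
  shows "card {i. i < n \<and> u \<in> half_arc n i \<and> v \<notin> half_arc n i} = nat (cyc_dist n u v)"
proof -
  define k where "k = n div 2"
  define d where "d = nat ((int v - int u) mod int n)"
  define f where "f i = nat ((int u - int i) mod int n)" for i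
  have d: "(int v - int u) mod int n = int d" "d < n"
    unfolding d_def using assms(1) by (auto simp: nat_less_iff)
  have "(int v - int i) mod int n = int ((f i + d) mod n)" for i
  proof -
    have "(int v - int i) mod int n = ((int u - int i) mod int n + (int v - int u) mod int n) mod int n"
      by (simp add: mod_add_eq)
    then show ?thesis unfolding f_def d(1) using assms(1) by (simp add: zmod_int)
  qed
  then have "u \<in> half_arc n i \<and> v \<notin> half_arc n i \<longleftrightarrow> f i < k \<and> \<not> (f i + d) mod n < k" for i
    unfolding half_arc_def arc_def k_def f_def using assms by (auto simp: nat_less_iff)
  then have "card {i. i < n \<and> u \<in> half_arc n i \<and> v \<notin> half_arc n i}
      = card {j. j < n \<and> j < k \<and> \<not> (j + d) mod n < k}"
    using card_filter_diff_mod[OF assms(1), of "\<lambda>j. j < k \<and> \<not> (j + d) mod n < k"]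
    unfolding f_def by simp
  also have "\<dots> = min d (n - d)" by (rule card_window_rotate_out) (use d in \<open>auto simp: k_def\<close>)
  finally show ?thesis using cyc_dist_eq_min[OF assms(1), of u v] unfolding d_def by simp
qed

lemma Wiener_eq_sum_cyc_dist:
  assumes "n \<ge> 3" "A \<subseteq> cyc_V n"
  shows "2 * Wiener n A = (\<Sum>u\<in>A. \<Sum>v\<in>A. nat (cyc_dist n u v))"
proof -
  have "finite A" using assms(2) finite_subset unfolding cyc_V_def by blast
  then have "(\<Sum>u\<in>A. \<Sum>v\<in>A. nat (cyc_dist n u v))
      = 2 * (\<Sum>(u, v) \<in> {(u, v). u \<in> A \<and> v \<in> A \<and> u < v}. nat (cyc_dist n u v))"
    by (rule sum_sum_symmetric_eq_double) (auto simp: cyc_dist_def min.commute)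
  also have "(\<Sum>(u, v) \<in> {(u, v). u \<in> A \<and> v \<in> A \<and> u < v}. nat (cyc_dist n u v)) = Wiener n A"
    unfolding Wiener_def using assms by (intro sum.cong) (auto simp: gdist_cyc cyc_V_def)
  finally show ?thesis by simp
qed

lemma Wiener_eq_sum_half_count:
  assumes "n \<ge> 3" "A \<subseteq> cyc_V n"
  shows "2 * Wiener n A = (\<Sum>i<n. half_count n A i * (card A - half_count n A i))"
proof -
  have fin: "finite A" using assms(2) finite_subset unfolding cyc_V_def by blast
  have AV: "u < n" if "u \<in> A" for u using assms(2) that unfolding cyc_V_def by auto
  have count: "half_count n A i * (card A - half_count n A i)
      = (\<Sum>u\<in>A. \<Sum>v\<in>A. of_bool (u \<in> half_arc n i) * of_bool (v \<notin> half_arc n i))" for i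
  proof -
    have "A \<inter> {v. v \<notin> half_arc n i} = A - A \<inter> half_arc n i" by auto
    then have "card A - half_count n A i = card (A \<inter> {v. v \<notin> half_arc n i})"
      unfolding half_count_def using fin by (simp add: card_Diff_subset)
    then show ?thesis
      unfolding half_count_def sum_product[symmetric] using fin by (simp add: Int_def)
  qed
  have "2 * Wiener n A = (\<Sum>u\<in>A. \<Sum>v\<in>A. card {i. i < n \<and> u \<in> half_arc n i \<and> v \<notin> half_arc n i})"
    unfolding Wiener_eq_sum_cyc_dist[OF assms]
    using card_half_arcs_separating assms(1) AV by (intro sum.cong) auto
  also have "\<dots> = (\<Sum>u\<in>A. \<Sum>v\<in>A. \<Sum>i<n. of_bool (u \<in> half_arc n i) * of_bool (v \<notin> half_arc n i))"
    unfolding card_lessThan_filter by (simp add: of_bool_conj)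
  also have "\<dots> = (\<Sum>u\<in>A. \<Sum>i<n. \<Sum>v\<in>A. of_bool (u \<in> half_arc n i) * of_bool (v \<notin> half_arc n i))"
    by (intro sum.cong refl sum.swap)
  also have "\<dots> = (\<Sum>i<n. \<Sum>u\<in>A. \<Sum>v\<in>A. of_bool (u \<in> half_arc n i) * of_bool (v \<notin> half_arc n i))"
    by (rule sum.swap)
  finally show ?thesis unfolding count .
qed

lemma sum_half_count:
  assumes "n \<ge> 3" "A \<subseteq> cyc_V n"
  shows "(\<Sum>i<n. half_count n A i) = n div 2 * card A"
proof -
  have fin: "finite A" using assms(2) finite_subset unfolding cyc_V_def by blast
  have "(\<Sum>i<n. half_count n A i) = (\<Sum>i<n. \<Sum>u\<in>A. of_bool (u \<in> half_arc n i))"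
    unfolding half_count_def using fin by (simp add: Int_def)
  also have "\<dots> = (\<Sum>u\<in>A. card {i. i < n \<and> u \<in> half_arc n i})"
    unfolding card_lessThan_filter by (rule sum.swap)
  also have "\<dots> = (\<Sum>u\<in>A. n div 2)"
    using assms card_arcs_containing[of n "n div 2"] unfolding half_arc_def cyc_V_def
    by (intro sum.cong) auto
  finally show ?thesis by simp
qed

lemma Wiener_eq_sum_squares:
  assumes "n \<ge> 3" "B \<subseteq> cyc_V n"
  shows "2 * int (Wiener n B) = int (card B) * int (n div 2 * card B) - (\<Sum>i<n. (int (half_count n B i))\<^sup>2)"
proof -
  define g where "g i = int (half_count n B i)" for i
  have "2 * int (Wiener n B) = (\<Sum>i<n. int (half_count n B i * (card B - half_count n B i)))"
    unfolding of_nat_sum[symmetric] Wiener_eq_sum_half_count[OF assms, symmetric] by simp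
  also have "\<dots> = (\<Sum>i<n. g i * (int (card B) - g i))"
    unfolding g_def using half_count_le_card[OF assms(2)] by (simp add: of_nat_diff)
  also have "\<dots> = int (card B) * (\<Sum>i<n. g i) - (\<Sum>i<n. (g i)\<^sup>2)"
    by (simp add: sum_distrib_left sum_subtractf power2_eq_square algebra_simps)
  finally show ?thesis
    unfolding g_def using sum_half_count[OF assms] by (metis of_nat_sum)
qed

section \<open>Maximizers\<close>

text \<open>The jump points of \<open>v \<mapsto> \<lfloor>v m / n\<rfloor>\<close>: every window of \<open>k\<close> consecutive vertices
  contains \<open>\<lfloor>k m / n\<rfloor>\<close> or \<open>\<lfloor>k m / n\<rfloor> + 1\<close> of them.\<close>

definition beatty_set :: "nat \<Rightarrow> nat \<Rightarrow> nat set" where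
  "beatty_set n m = {v. v < n \<and> v * m div n < Suc v * m div n}"

lemma card_beatty_steps:
  assumes "m \<le> n"
  shows "card {j. j < l \<and> (a + j) * m div n < Suc (a + j) * m div n} = (a + l) * m div n - a * m div n"
proof (induction l)
  case (Suc l)
  define S where "S l = {j. j < l \<and> (a + j) * m div n < Suc (a + j) * m div n}" for l
  have fin: "finite (S l)" and new: "l \<notin> S l" unfolding S_def by auto
  have mono: "a * m div n \<le> (a + l) * m div n" "(a + l) * m div n \<le> Suc (a + l) * m div n"
    by (simp_all add: div_le_mono del: mult_Suc)
  show ?case
  proof (cases "(a + l) * m div n < Suc (a + l) * m div n")
    case True
    then have "S (Suc l) = insert l (S l)" unfolding S_def by (auto simp: less_Suc_eq simp del: mult_Suc)
    moreover have "Suc (a + l) * m div n = (a + l) * m div n + 1"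
      using True div_mult_Suc_le[OF assms, of "a + l"] by linarith
    ultimately show ?thesis using Suc fin new mono unfolding S_def by simp
  next
    case False
    then have "S (Suc l) = S l" unfolding S_def by (auto simp: less_Suc_eq simp del: mult_Suc)
    moreover have "Suc (a + l) * m div n = (a + l) * m div n" using False mono(2) by linarith
    ultimately show ?thesis using Suc unfolding S_def by simp
  qed
qed simp

lemma beatty_step_mod:
  assumes "n > 0"
  shows "(t mod n) * m div n < Suc (t mod n) * m div n \<longleftrightarrow> t * m div n < Suc t * m div n"
proof -
  have shift: "(r + n * q) * m div n = r * m div n + m * q" for r q
  proof -
    have "(r + n * q) * m = r * m + (m * q) * n" by (simp add: algebra_simps)
    then show ?thesis using assms by simp
  qed
  have "t * m div n = t mod n * m div n + m * (t div n)"
    using shift[of "t mod n" "t div n"] by simp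
  moreover have "Suc t * m div n = Suc (t mod n) * m div n + m * (t div n)"
    using shift[of "Suc (t mod n)" "t div n"] by simp
  ultimately show ?thesis by simp
qed

lemma card_beatty_set:
  assumes "m \<le> n"
  shows "card (beatty_set n m) = m"
  using card_beatty_steps[OF assms, of n 0] assms unfolding beatty_set_def by simp

lemma half_count_beatty_set:
  assumes "n \<ge> 3" "m \<le> n" "i < n"
  shows "half_count n (beatty_set n m) i \<in> {n div 2 * m div n, Suc (n div 2 * m div n)}"
proof -
  define k where "k = n div 2"
  have n0: "n > 0" "k \<le> n" unfolding k_def using assms by auto
  have "beatty_set n m \<inter> half_arc n i
      = (\<lambda>j. (i + j) mod n) ` {j. j < k \<and> (i + j) * m div n < Suc (i + j) * m div n}"
    unfolding half_arc_def arc_eq_image[OF n0] k_def[symmetric] beatty_set_def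
    using beatty_step_mod[OF n0(1)] n0 by auto
  moreover have "inj_on (\<lambda>j. (i + j) mod n) {j. j < k \<and> (i + j) * m div n < Suc (i + j) * m div n}"
    by (rule inj_on_subset[OF inj_on_add_mod]) (use n0 in auto)
  ultimately have "half_count n (beatty_set n m) i = (i + k) * m div n - i * m div n"
    unfolding half_count_def using card_beatty_steps[OF assms(2)] by (simp add: card_image)
  also have "\<dots> = (i * m mod n + k * m) div n"
  proof -
    define r q where "r = i * m mod n" and "q = i * m div n"
    have "i * m = r + n * q" unfolding r_def q_def by simp
    then have "(i + k) * m = (r + k * m) + n * q" by (simp add: algebra_simps)
    then have "(i + k) * m div n = (r + k * m) div n + q" using n0 by simp
    then show ?thesis unfolding r_def q_def by simp
  qed
  finally have "half_count n (beatty_set n m) i = (i * m mod n + k * m) div n" .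
  moreover have "k * m div n \<le> (i * m mod n + k * m) div n" by (simp add: div_le_mono)
  moreover have "(i * m mod n + k * m) div n \<le> (k * m + n) div n"
    using mod_less_divisor[OF n0(1), of "i * m"] by (simp add: div_le_mono)
  ultimately show ?thesis using n0 unfolding k_def by (auto simp: div_add_self2)
qed

lemma sum_sq_half_count_excess:
  assumes "n \<ge> 3" "A \<subseteq> cyc_V n" "B \<subseteq> cyc_V n" "card B = card A"
    and near: "\<forall>i<n. half_count n A i \<in> {c, Suc c}"
  shows "(\<Sum>i<n. (int (half_count n B i))\<^sup>2) = (\<Sum>i<n. (int (half_count n A i))\<^sup>2)
           + (\<Sum>i<n. (int (half_count n B i) - int c)\<^sup>2 - (int (half_count n B i) - int c))"
proof (rule sum_squares_excess)
  show "(\<Sum>i<n. int (half_count n B i)) = (\<Sum>i<n. int (half_count n A i))"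
    using sum_half_count[OF assms(1,2)] sum_half_count[OF assms(1,3)] assms(4) by (metis of_nat_sum)
  show "\<forall>i<n. int (half_count n A i) = int c \<or> int (half_count n A i) = int c + 1"
    using near by auto
qed

lemma maximizer_iff_half_count:
  assumes "n \<ge> 3" "A \<subseteq> cyc_V n" "card A \<le> n"
  defines "c \<equiv> n div 2 * card A div n"
  shows "is_maximizer n A \<longleftrightarrow> (\<forall>i<n. half_count n A i \<in> {c, Suc c})"
proof
  assume max: "is_maximizer n A"
  define B where "B = beatty_set n (card A)"
  have B: "B \<subseteq> cyc_V n" "card B = card A" "\<forall>i<n. half_count n B i \<in> {c, Suc c}"
    unfolding B_def c_def using card_beatty_set half_count_beatty_set assms(1,3)
    by (auto simp: beatty_set_def cyc_V_def)
  have "Wiener n B \<le> Wiener n A" using max B unfolding is_maximizer_def by blast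
  then have "(\<Sum>i<n. (int (half_count n A i))\<^sup>2) \<le> (\<Sum>i<n. (int (half_count n B i))\<^sup>2)"
    using Wiener_eq_sum_squares[OF assms(1,2)] Wiener_eq_sum_squares[OF assms(1) B(1)] B(2) by simp
  then have "(\<Sum>i<n. (int (half_count n A i) - int c)\<^sup>2 - (int (half_count n A i) - int c)) = 0"
    using sum_sq_half_count_excess[OF assms(1) B(1) assms(2) B(2)[symmetric] B(3)]
      sum_sq_minus_self_nonneg[where e="\<lambda>i. int (half_count n A i) - int c" and n=n] by linarith
  then show "\<forall>i<n. half_count n A i \<in> {c, Suc c}"
    unfolding sum_sq_minus_self_eq_0_iff by auto
next
  assume near: "\<forall>i<n. half_count n A i \<in> {c, Suc c}"
  show "is_maximizer n A" unfolding is_maximizer_def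
  proof (intro conjI allI impI)
    fix B assume B: "B \<subseteq> cyc_V n \<and> card B = card A"
    have "(\<Sum>i<n. (int (half_count n A i))\<^sup>2) \<le> (\<Sum>i<n. (int (half_count n B i))\<^sup>2)"
      using sum_sq_half_count_excess[OF assms(1,2) _ _ near, of B] B
        sum_sq_minus_self_nonneg[where e="\<lambda>i. int (half_count n B i) - int c" and n=n] by linarith
    then have "2 * int (Wiener n B) \<le> 2 * int (Wiener n A)"
      using Wiener_eq_sum_squares[OF assms(1,2)] Wiener_eq_sum_squares[OF assms(1), of B] B by simp
    then show "Wiener n B \<le> Wiener n A" by simp
  qed (rule assms(2))
qed

section \<open>Balanced sets\<close>

lemma eq_conn_bipart_sym: "eq_conn_bipart n P Q \<Longrightarrow> eq_conn_bipart n Q P"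
  unfolding eq_conn_bipart_def by (auto simp: abs_minus_commute)

lemma card_half_arc: "n > 0 \<Longrightarrow> card (half_arc n i) = n div 2"
  unfolding half_arc_def by (simp add: card_arc)

lemma card_compl_half_arc: "n > 0 \<Longrightarrow> card (cyc_V n - half_arc n i) = n - n div 2"
  unfolding half_arc_def by (simp add: arc_compl card_arc)

lemma card_inter_compl_half_arc:
  assumes "A \<subseteq> cyc_V n"
  shows "card (A \<inter> (cyc_V n - half_arc n i)) = card A - half_count n A i"
proof -
  have "A \<inter> (cyc_V n - half_arc n i) = A - A \<inter> half_arc n i" using assms by auto
  then show ?thesis
    unfolding half_count_def using finite_subset[OF assms] by (simp add: card_Diff_subset cyc_V_def)
qed

lemma eq_conn_bipart_half_arc:
  assumes "n \<ge> 3"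
  shows "eq_conn_bipart n (half_arc n i) (cyc_V n - half_arc n i)"
proof -
  have n0: "n > 0" "n div 2 \<le> n" using assms by auto
  have "card (half_arc n i) > 0" "card (cyc_V n - half_arc n i) > 0"
    using card_half_arc[OF n0(1), of i] card_compl_half_arc[OF n0(1), of i] assms by auto
  then have "half_arc n i \<noteq> {}" "cyc_V n - half_arc n i \<noteq> {}" by (metis card.empty less_irrefl)+
  moreover have "conn_set n (half_arc n i)" "conn_set n (cyc_V n - half_arc n i)"
    unfolding half_arc_def arc_compl[OF n0]
    using conn_set_arc[OF assms] by simp_all
  moreover have "half_arc n i \<subseteq> cyc_V n" unfolding half_arc_def by (rule arc_subset)
  ultimately show ?thesis
    unfolding eq_conn_bipart_def card_half_arc[OF n0(1)] card_compl_half_arc[OF n0(1)] by auto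
qed

lemma eq_conn_bipart_cases:
  assumes "n \<ge> 3" "eq_conn_bipart n P Q"
  shows "\<exists>i<n. (P = half_arc n i \<and> Q = cyc_V n - half_arc n i)
               \<or> (Q = half_arc n i \<and> P = cyc_V n - half_arc n i)"
proof -
  have PQ: "P \<inter> Q = {}" "P \<union> Q = cyc_V n" "\<bar>int (card P) - int (card Q)\<bar> \<le> 1"
    "conn_set n P" "conn_set n Q" using assms(2) unfolding eq_conn_bipart_def by auto
  have "finite P" "finite Q" using PQ(2) unfolding cyc_V_def by (metis finite_Un finite_lessThan)+
  then have "card P + card Q = n" using card_Un_disjoint PQ(1,2) unfolding cyc_V_def by fastforce
  then have "card P = n div 2 \<or> card Q = n div 2" using PQ(3) by linarith
  moreover have "0 < n div 2" "n div 2 < n" using assms(1) by auto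
  ultimately obtain i where "i < n" "P = half_arc n i \<or> Q = half_arc n i"
    using conn_set_is_arc[OF assms(1) PQ(4)] conn_set_is_arc[OF assms(1) PQ(5)]
    unfolding half_arc_def by metis
  then show ?thesis using PQ(1,2) by blast
qed

lemma all_eq_conn_bipart_iff:
  assumes "n \<ge> 3"
  shows "(\<forall>P Q. eq_conn_bipart n P Q \<longrightarrow> R P Q)
     \<longleftrightarrow> (\<forall>i<n. R (half_arc n i) (cyc_V n - half_arc n i) \<and> R (cyc_V n - half_arc n i) (half_arc n i))"
  using eq_conn_bipart_cases[OF assms] eq_conn_bipart_half_arc[OF assms]
    eq_conn_bipart_sym[OF eq_conn_bipart_half_arc[OF assms]] by metis

lemma balanced_iff_half_count:
  assumes "n \<ge> 3" "A \<subseteq> cyc_V n"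
  shows "balanced n A \<longleftrightarrow> (\<forall>i<n. card A \<le> 2 * half_count n A i + 1 \<and> 2 * half_count n A i \<le> card A + 1)"
proof -
  have "\<bar>int g - int (m - g)\<bar> \<le> 1 \<and> \<bar>int (m - g) - int g\<bar> \<le> 1 \<longleftrightarrow> m \<le> 2 * g + 1 \<and> 2 * g \<le> m + 1"
    if "g \<le> m" for g m :: nat
    using that by (auto simp: of_nat_diff)
  then show ?thesis
    unfolding balanced_def all_eq_conn_bipart_iff[OF assms(1)] card_inter_compl_half_arc[OF assms(2)]
      half_count_def[symmetric]
    using half_count_le_card[OF assms(2)] by simp
qed

lemma weakly_balanced_iff_half_count:
  assumes "n \<ge> 3" "A \<subseteq> cyc_V n"
  shows "weakly_balanced n A \<longleftrightarrow> (\<forall>i<n. (card A \<le> 2 * half_count n A i + 1 \<and> 2 * half_count n A i \<le> card A + 1)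
           \<or> (odd n \<and> card A = 2 * half_count n A i + 2))"
proof -
  have n0: "n > 0" using assms(1) by simp
  have "(\<bar>int g - int (m - g)\<bar> \<le> 2 \<and> (m - g = g + 2 \<longrightarrow> n div 2 < n - n div 2))
      \<and> (\<bar>int (m - g) - int g\<bar> \<le> 2 \<and> (g = m - g + 2 \<longrightarrow> n - n div 2 < n div 2))
      \<longleftrightarrow> (m \<le> 2 * g + 1 \<and> 2 * g \<le> m + 1) \<or> (odd n \<and> m = 2 * g + 2)" if "g \<le> m" for g m
    using that by (simp add: of_nat_diff) presburger
  then show ?thesis
    unfolding weakly_balanced_def all_eq_conn_bipart_iff[OF assms(1)] card_inter_compl_half_arc[OF assms(2)]
      half_count_def[symmetric] card_half_arc[OF n0] card_compl_half_arc[OF n0]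
    using half_count_le_card[OF assms(2)] by simp
qed

lemma weakly_balanced_iff_balanced:
  assumes "n \<ge> 3" "A \<subseteq> cyc_V n" "even n \<or> odd (card A)"
  shows "weakly_balanced n A \<longleftrightarrow> balanced n A"
  unfolding weakly_balanced_iff_half_count[OF assms(1,2)] balanced_iff_half_count[OF assms(1,2)]
  using assms(3) by auto

lemma not_balanced_if_odd_even:
  assumes "n \<ge> 3" "A \<subseteq> cyc_V n" "odd n" "even (card A)" "card A \<noteq> 0"
  shows "\<not> balanced n A"
proof
  assume "balanced n A"
  then have "2 * half_count n A i = card A" if "i < n" for i
    using that assms(4) unfolding balanced_iff_half_count[OF assms(1,2)] by fastforce
  then have "2 * (\<Sum>i<n. half_count n A i) = n * card A" by (simp add: sum_distrib_left)
  moreover have "2 * (n div 2) = n - 1" using assms(3) by presburger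
  ultimately have "n * card A = (n - 1) * card A"
    unfolding sum_half_count[OF assms(1,2)] by (metis mult.assoc)
  then have "n = n - 1" using assms(5) by simp
  then show False using assms(1) by simp
qed

lemma maximizer_iff_weakly_balanced:
  assumes "n \<ge> 3" "A \<subseteq> cyc_V n" "card A \<le> n"
  shows "is_maximizer n A \<longleftrightarrow> weakly_balanced n A"
proof -
  define m c where "m = card A" and "c = n div 2 * card A div n"
  define wb where "wb x \<longleftrightarrow> (m \<le> 2 * x + 1 \<and> 2 * x \<le> m + 1) \<or> (odd n \<and> m = 2 * x + 2)" for x
  have "(\<forall>i<n. half_count n A i \<in> {c, Suc c}) \<longleftrightarrow> (\<forall>i<n. wb (half_count n A i))"
  proof (cases "even n")
    case even_n: True
    then have c: "c = m div 2" unfolding c_def m_def using assms(1) by (simp add: half_mult_div_even)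
    show ?thesis
    proof (cases "even m")
      case True
      have wb: "wb x \<longleftrightarrow> x = c" for x unfolding wb_def c using even_n True by presburger
      obtain p q where "n = 2 * p" "m = 2 * q" using even_n True by (metis evenE)
      then have "(\<Sum>i<n. half_count n A i) = n * c"
        unfolding sum_half_count[OF assms(1,2)] c m_def[symmetric] by simp
      then have "\<forall>i<n. half_count n A i = c" if "\<forall>i<n. half_count n A i \<in> {c, Suc c}"
        using that by (intro all_eq_if_sum_eq) auto
      then show ?thesis unfolding wb by blast
    next
      case False
      have "x \<in> {c, Suc c} \<longleftrightarrow> wb x" for x unfolding wb_def c using even_n False by simp presburger
      then show ?thesis by simp
    qed
  next
    case False
    then have c: "c = (m - 1) div 2" unfolding c_def m_def using assms(3) by (simp add: half_mult_div_odd)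
    have "x \<in> {c, Suc c} \<longleftrightarrow> wb x" if "x \<le> m" for x
      unfolding wb_def c using False that by simp presburger
    then show ?thesis using half_count_le_card[OF assms(2)] unfolding m_def by simp
  qed
  then show ?thesis
    unfolding maximizer_iff_half_count[OF assms] weakly_balanced_iff_half_count[OF assms(1,2)]
      wb_def m_def c_def .
qed

theorem mainTheorem16:
  fixes n m :: nat and A :: "nat set"
  assumes "n \<ge> 3" and "A \<subseteq> cyc_V n" and "card A = m" and "2 \<le> m" and "m \<le> n"
  shows "((even n \<or> odd m) \<longrightarrow> (is_maximizer n A \<longleftrightarrow> balanced n A))
       \<and> ((odd n \<and> even m) \<longrightarrow>
            ((is_maximizer n A \<longleftrightarrow> weakly_balanced n A) \<and>
             (\<forall>B. B \<subseteq> cyc_V n \<and> card B = m \<and> is_maximizer n B \<longrightarrow> \<not> balanced n B)))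
       \<and> (is_maximizer n A \<longleftrightarrow> weakly_balanced n A)"
proof -
  have max_wb: "is_maximizer n A \<longleftrightarrow> weakly_balanced n A"
    using maximizer_iff_weakly_balanced[OF assms(1,2)] assms(3,5) by simp
  moreover have "is_maximizer n A \<longleftrightarrow> balanced n A" if "even n \<or> odd m"
    using max_wb weakly_balanced_iff_balanced[OF assms(1,2)] that assms(3) by simp
  moreover have "\<not> balanced n B" if "odd n" "even m" "B \<subseteq> cyc_V n" "card B = m" for B
    using not_balanced_if_odd_even[OF assms(1) that(3,1)] that(2,4) assms(4) by simp
  ultimately show ?thesis by blast
qed

end
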